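(* Let $A\in\mathbb{R}^{nd\times nd}$ be symmetric with $A\succ0$ and $b\in\mathbb{R}^{nd}$, and suppose $Au+b=0$ has a unique solution $u_*$. Consider the iteration $$u_{\ell+1}=u_\ell-\delta\eta\,(A u_{\ell-1}+b),\qquad \ell\ge1,$$ with $u_0=u_1=0$. Then, for $\delta\eta\in\big(0,1/(4\lambda_{\max}(A))\big)$, $u_\ell\to u_*$ as $\ell\to\infty$.
   Context: $\lambda_{\max}(A)$ denotes the largest eigenvalue of $A$. In the paper, $A=(I-\frac{\partial c}{\partial p})^\top(I-\frac{\partial c}{\partial p})$ and $Au+b=\nabla F(u)$ for the least-squares objective $F$ of the coverage control problem. *)

theory Defs
  imports "HOL-Analysis.Analysis"
begin

definition lambda_max :: "real^'n^'n \<Rightarrow> real" where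
  "lambda_max A = Max {l. \<exists>v. v \<noteq> 0 \<and> A *v v = l *\<^sub>R v}"

definition pos_def :: "real^'n^'n \<Rightarrow> bool" where
  "pos_def A \<longleftrightarrow> (\<forall>x. x \<noteq> 0 \<longrightarrow> x \<bullet> (A *v x) > 0)"

end

theory Submission
  imports Defs
begin

text \<open>
  With \<open>h = \<delta> \<eta>\<close>, the error \<open>e l = u l - u\<^sub>*\<close> obeys \<open>e (l + 2) = e (l + 1) - h A e l\<close>.
  The energy \<open>V x y = |x|\<^sup>2 + h (x - y)\<^sup>T A (x - y) + h y\<^sup>T A y\<close> of two consecutive errors
  \<open>(x, y) = (e (l + 1), e l)\<close> is nonnegative, and one step changes it by exactly
  \<open>- 2 h y\<^sup>T A y + h\<^sup>2 |A y|\<^sup>2 + h\<^sup>3 (A y)\<^sup>T A (A y)\<close>. As \<open>|A y|\<^sup>2 \<le> \<lambda> y\<^sup>T A y\<close> for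
  \<open>\<lambda> = lambda_max A\<close> and \<open>h \<lambda> \<le> 1/2\<close>, the energy drops by at least \<open>h (e l)\<^sup>T A (e l)\<close> per
  step, so these decrements tend to 0, and by positive definiteness so does \<open>e l\<close>. That \<open>\<lambda>\<close>
  bounds the Rayleigh quotient of a symmetric matrix holds because the maximiser of the quadratic
  form on the unit sphere is an eigenvector.
\<close>

lemma inner_matrix_vector_symmetric:
  fixes A :: "real^'n^'n"
  assumes "transpose A = A"
  shows "x \<bullet> (A *v y) = (A *v x) \<bullet> y"
  by (metis assms dot_lmul_matrix transpose_matrix_vector)

lemma pos_def_imp_nonneg:
  fixes A :: "real^'n^'n"
  assumes "pos_def A"
  shows "0 \<le> x \<bullet> (A *v x)"
  using assms by (cases "x = 0") (auto simp: pos_def_def less_imp_le)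

lemma selfadjoint_nonneg_form_zero_imp_zero:
  fixes f :: "'a::real_inner \<Rightarrow> 'a"
  assumes f: "linear f" and adj: "\<And>x y. f x \<bullet> y = x \<bullet> f y"
    and nonneg: "\<And>x. 0 \<le> x \<bullet> f x" and zero: "v \<bullet> f v = 0"
  shows "f v = 0"
proof -
  define w where "w = f v"
  define s where "s = w \<bullet> w"
  define K where "K = w \<bullet> f w"
  have K: "0 \<le> K" by (simp add: K_def nonneg)
  have form: "0 \<le> t * (t * K - 2 * s)" for t
  proof -
    have "0 \<le> (v - t *\<^sub>R w) \<bullet> f (v - t *\<^sub>R w)" by (rule nonneg)
    also have "\<dots> = t * (t * K - 2 * s)"
      using zero adj[of v w]
      by (simp add: linear_diff[OF f] linear_cmul[OF f] inner_diff_left inner_diff_right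
          inner_commute K_def s_def w_def algebra_simps)
    finally show ?thesis .
  qed
  have "s \<le> 0"
  proof (rule ccontr)
    assume "\<not> s \<le> 0"
    define t where "t = s / (K + 1)"
    have "0 < t" using \<open>\<not> s \<le> 0\<close> K by (simp add: t_def)
    hence "2 * s \<le> t * K" using form[of t] by (simp add: zero_le_mult_iff)
    moreover have "t * K \<le> s" using \<open>\<not> s \<le> 0\<close> K by (simp add: t_def field_simps)
    ultimately show False using \<open>\<not> s \<le> 0\<close> by linarith
  qed
  thus ?thesis by (metis inner_eq_zero_iff inner_ge_zero order_antisym s_def w_def)
qed

lemma finite_eigenvalues_symmetric:
  fixes A :: "real^'n^'n"
  assumes symm: "transpose A = A"
  shows "finite {l. \<exists>v. v \<noteq> 0 \<and> A *v v = l *\<^sub>R v}" (is "finite ?L")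
proof -
  define g where "g l = (SOME v. v \<noteq> 0 \<and> A *v v = l *\<^sub>R v)" for l
  have g: "g l \<noteq> 0 \<and> A *v g l = l *\<^sub>R g l" if "l \<in> ?L" for l
    using that unfolding g_def by (metis (mono_tags, lifting) mem_Collect_eq someI_ex)
  have "inj_on g ?L"
  proof (rule inj_onI)
    fix l1 l2 assume l: "l1 \<in> ?L" "l2 \<in> ?L" and "g l1 = g l2"
    have "l1 *\<^sub>R g l1 = A *v g l2" using g[OF l(1)] \<open>g l1 = g l2\<close> by simp
    also have "\<dots> = l2 *\<^sub>R g l1" using g[OF l(2)] \<open>g l1 = g l2\<close> by simp
    finally have "l1 *\<^sub>R g l1 = l2 *\<^sub>R g l1" .
    thus "l1 = l2" using g[OF l(1)] by simp
  qed
  have "orthogonal (g l1) (g l2)" if "l1 \<in> ?L" "l2 \<in> ?L" "l1 \<noteq> l2" for l1 l2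
  proof -
    have "l1 * (g l1 \<bullet> g l2) = (A *v g l1) \<bullet> g l2" using g[OF that(1)] by simp
    also have "\<dots> = g l1 \<bullet> (A *v g l2)" by (simp add: inner_matrix_vector_symmetric[OF symm])
    also have "\<dots> = l2 * (g l1 \<bullet> g l2)" using g[OF that(2)] by simp
    finally show ?thesis using that(3) by (simp add: orthogonal_def)
  qed
  hence "pairwise orthogonal (g ` ?L)"
    by (auto simp: pairwise_def)
  moreover have "0 \<notin> g ` ?L" using g by (metis (no_types, lifting) image_iff)
  ultimately have "finite (g ` ?L)"
    using pairwise_orthogonal_independent independent_imp_finite by blast
  thus ?thesis using finite_imageD \<open>inj_on g ?L\<close> by blast
qed

lemma quadratic_form_sgn:
  fixes A :: "real^'n^'n"
  shows "x \<bullet> (A *v x) = (x \<bullet> x) * (sgn x \<bullet> (A *v sgn x))"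
proof (cases "x = 0")
  case False
  have "sgn x \<bullet> (A *v sgn x) = x \<bullet> (A *v x) / (norm x)\<^sup>2"
    using False by (simp add: sgn_div_norm matrix_vector_mult_scaleR field_simps power2_eq_square)
  thus ?thesis using False by (simp add: power2_norm_eq_inner)
qed simp

lemma symmetric_rayleigh_maximum_eigenvalue:
  fixes A :: "real^'n^'n"
  assumes symm: "transpose A = A"
  obtains v \<mu> where "norm v = 1" "A *v v = \<mu> *\<^sub>R v" "\<And>x. x \<bullet> (A *v x) \<le> \<mu> * (x \<bullet> x)"
proof -
  obtain v where v: "v \<in> sphere 0 1"
    and max: "\<And>y. y \<in> sphere 0 1 \<Longrightarrow> y \<bullet> (A *v y) \<le> v \<bullet> (A *v v)"
  proof -
    have "\<exists>x\<in>sphere 0 1. \<forall>y\<in>sphere 0 1. y \<bullet> (A *v y) \<le> x \<bullet> (A *v x)"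
      by (rule continuous_attains_sup) (auto intro!: continuous_intros)
    thus thesis using that by blast
  qed
  define \<mu> where "\<mu> = v \<bullet> (A *v v)"
  have bound: "x \<bullet> (A *v x) \<le> \<mu> * (x \<bullet> x)" for x
    using max[of "sgn x"] quadratic_form_sgn[of x A]
    by (cases "x = 0") (auto simp: \<mu>_def norm_sgn mult_left_mono)
  have "\<mu> *\<^sub>R v - A *v v = 0"
  proof (rule selfadjoint_nonneg_form_zero_imp_zero[of "\<lambda>x. \<mu> *\<^sub>R x - A *v x"])
    show "linear (\<lambda>x. \<mu> *\<^sub>R x - A *v x)"
      by (intro linear_compose_sub linear_compose_scale_right linear_ident matrix_vector_mul_linear)
    show "(\<mu> *\<^sub>R x - A *v x) \<bullet> y = x \<bullet> (\<mu> *\<^sub>R y - A *v y)" for x y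
      by (simp add: inner_diff_left inner_diff_right inner_matrix_vector_symmetric[OF symm])
    show "0 \<le> x \<bullet> (\<mu> *\<^sub>R x - A *v x)" for x
      using bound[of x] by (simp add: inner_diff_right)
    have "v \<bullet> v = 1" using v by (simp add: dot_square_norm)
    thus "v \<bullet> (\<mu> *\<^sub>R v - A *v v) = 0"
      by (simp add: inner_diff_right \<mu>_def)
  qed
  hence "A *v v = \<mu> *\<^sub>R v" by simp
  with v bound show thesis by (intro that) auto
qed

lemma quadratic_form_le_lambda_max:
  fixes A :: "real^'n^'n"
  assumes symm: "transpose A = A"
  shows "x \<bullet> (A *v x) \<le> lambda_max A * (x \<bullet> x)"
proof -
  obtain v \<mu> where v: "norm v = 1" "A *v v = \<mu> *\<^sub>R v"
    and bound: "\<And>x. x \<bullet> (A *v x) \<le> \<mu> * (x \<bullet> x)"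
    using symmetric_rayleigh_maximum_eigenvalue[OF symm] by blast
  have "v \<noteq> 0" using v(1) by auto
  hence "\<mu> \<le> lambda_max A"
    unfolding lambda_max_def using v(2)
    by (intro Max_ge finite_eigenvalues_symmetric[OF symm]) auto
  thus ?thesis using bound[of x] by (meson inner_ge_zero mult_right_mono order_trans)
qed

lemma lambda_max_pos:
  fixes A :: "real^'n^'n"
  assumes "transpose A = A" and "pos_def A"
  shows "0 < lambda_max A"
proof -
  have "0 < axis i 1 \<bullet> (A *v axis i 1)" for i :: 'n
    using \<open>pos_def A\<close> by (simp add: pos_def_def axis_eq_0_iff)
  also have "\<dots> i \<le> lambda_max A" for i :: 'n
    using quadratic_form_le_lambda_max[OF \<open>transpose A = A\<close>, of "axis i 1"] by simp
  finally show ?thesis .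
qed

lemma pos_def_quadratic_form_ge:
  fixes A :: "real^'n^'n"
  assumes pd: "pos_def A"
  obtains m where "0 < m" "\<And>x. m * (x \<bullet> x) \<le> x \<bullet> (A *v x)"
proof -
  obtain v where v: "v \<in> sphere 0 1"
    and min: "\<And>y. y \<in> sphere 0 1 \<Longrightarrow> v \<bullet> (A *v v) \<le> y \<bullet> (A *v y)"
  proof -
    have "\<exists>x\<in>sphere 0 1. \<forall>y\<in>sphere 0 1. x \<bullet> (A *v x) \<le> y \<bullet> (A *v y)"
      by (rule continuous_attains_inf) (auto intro!: continuous_intros)
    thus thesis using that by blast
  qed
  have "v \<noteq> 0" using v by auto
  hence "0 < v \<bullet> (A *v v)" using pd by (simp add: pos_def_def)
  moreover have "(v \<bullet> (A *v v)) * (x \<bullet> x) \<le> x \<bullet> (A *v x)" for x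
    using min[of "sgn x"] quadratic_form_sgn[of x A]
    by (cases "x = 0") (auto simp: norm_sgn mult.commute mult_left_mono)
  ultimately show thesis using that by blast
qed

lemma matrix_vector_inner_self_le:
  fixes A :: "real^'n^'n"
  assumes symm: "transpose A = A" and nonneg: "\<And>x. 0 \<le> x \<bullet> (A *v x)"
    and bound: "\<And>x. x \<bullet> (A *v x) \<le> \<mu> * (x \<bullet> x)" and "0 < \<mu>"
  shows "(A *v y) \<bullet> (A *v y) \<le> \<mu> * (y \<bullet> (A *v y))"
proof -
  define c where "c = A *v y"
  define t where "t = 1 / \<mu>"
  have "0 \<le> (t *\<^sub>R c - y) \<bullet> (A *v (t *\<^sub>R c - y))" by (rule nonneg)
  also have "\<dots> = t\<^sup>2 * (c \<bullet> (A *v c)) - 2 * t * (c \<bullet> c) + y \<bullet> (A *v y)"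
    using inner_matrix_vector_symmetric[OF symm, of y c]
    by (simp add: c_def matrix_vector_mult_diff_distrib matrix_vector_mult_scaleR inner_diff_left
        inner_diff_right inner_commute power2_eq_square algebra_simps)
  also have "\<dots> \<le> t\<^sup>2 * (\<mu> * (c \<bullet> c)) - 2 * t * (c \<bullet> c) + y \<bullet> (A *v y)"
    using bound[of c] by (simp add: mult_left_mono)
  also have "\<dots> = y \<bullet> (A *v y) - (c \<bullet> c) / \<mu>"
    using \<open>0 < \<mu>\<close> by (simp add: t_def power2_eq_square field_simps)
  finally show ?thesis using \<open>0 < \<mu>\<close> by (simp add: c_def field_simps)
qed

definition lyapunov :: "real^'n^'n \<Rightarrow> real \<Rightarrow> real^'n \<Rightarrow> real^'n \<Rightarrow> real" where
  "lyapunov A h x y = x \<bullet> x + h * ((x - y) \<bullet> (A *v (x - y))) + h * (y \<bullet> (A *v y))"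

lemma lyapunov_ge:
  fixes A :: "real^'n^'n"
  assumes "\<And>x. 0 \<le> x \<bullet> (A *v x)" and "0 \<le> h"
  shows "x \<bullet> x \<le> lyapunov A h x y"
  using assms by (simp add: lyapunov_def)

lemma lyapunov_step:
  fixes A :: "real^'n^'n"
  assumes symm: "transpose A = A" and nonneg: "\<And>x. 0 \<le> x \<bullet> (A *v x)"
    and bound: "\<And>x. x \<bullet> (A *v x) \<le> \<mu> * (x \<bullet> x)" and "0 < \<mu>"
    and "0 \<le> h" and "h * \<mu> \<le> 1 / 2"
  shows "lyapunov A h (x - h *\<^sub>R (A *v y)) x + h * (y \<bullet> (A *v y)) \<le> lyapunov A h x y"
proof -
  define c where "c = A *v y"
  define q where "q = y \<bullet> (A *v y)"
  have "lyapunov A h (x - h *\<^sub>R c) x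
      = lyapunov A h x y - 2 * h * q + h\<^sup>2 * (c \<bullet> c) + h ^ 3 * (c \<bullet> (A *v c))"
    using inner_matrix_vector_symmetric[OF symm, of x y]
    by (simp add: lyapunov_def c_def q_def matrix_vector_mult_diff_distrib matrix_vector_mult_scaleR
        vec.neg inner_diff_left inner_diff_right inner_commute power2_eq_square power3_eq_cube algebra_simps)
  moreover have "0 \<le> h * q" using nonneg[of y] \<open>0 \<le> h\<close> by (simp add: q_def)
  moreover have "h\<^sup>2 * (c \<bullet> c) \<le> h * q / 2"
  proof -
    have "h\<^sup>2 * (c \<bullet> c) \<le> h\<^sup>2 * (\<mu> * q)"
      using matrix_vector_inner_self_le[OF symm nonneg bound \<open>0 < \<mu>\<close>, of y]
      by (simp add: c_def q_def mult_left_mono)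
    also have "\<dots> = (h * \<mu>) * (h * q)" by (simp add: power2_eq_square)
    also have "\<dots> \<le> (1 / 2) * (h * q)"
      using \<open>h * \<mu> \<le> 1 / 2\<close> \<open>0 \<le> h * q\<close> by (rule mult_right_mono)
    finally show ?thesis by simp
  qed
  moreover have "h ^ 3 * (c \<bullet> (A *v c)) \<le> h\<^sup>2 * (c \<bullet> c) / 2"
  proof -
    have "h ^ 3 * (c \<bullet> (A *v c)) \<le> h ^ 3 * (\<mu> * (c \<bullet> c))"
      using bound[of c] \<open>0 \<le> h\<close> by (simp add: mult_left_mono)
    also have "\<dots> = (h * \<mu>) * (h\<^sup>2 * (c \<bullet> c))" by (simp add: power2_eq_square power3_eq_cube)
    also have "\<dots> \<le> (1 / 2) * (h\<^sup>2 * (c \<bullet> c))"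
      using \<open>h * \<mu> \<le> 1 / 2\<close> by (rule mult_right_mono) simp
    finally show ?thesis by simp
  qed
  ultimately show ?thesis by (simp add: c_def q_def)
qed

lemma nonneg_decrements_tendsto_zero:
  fixes W d :: "nat \<Rightarrow> real"
  assumes "\<And>n. 0 \<le> W n" and dec: "\<And>n. W (Suc n) + d n \<le> W n" and "\<And>n. 0 \<le> d n"
  shows "d \<longlonglongrightarrow> 0"
proof -
  have "W (Suc n) \<le> W n" for n using dec[of n] assms(3)[of n] by linarith
  hence "decseq W" by (rule decseq_SucI)
  then obtain L where "W \<longlonglongrightarrow> L"
    using decseq_convergent[of W 0] assms(1) by blast
  hence "(\<lambda>n. W n - W (Suc n)) \<longlonglongrightarrow> L - L"
    by (intro tendsto_diff) (auto simp: LIMSEQ_Suc)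
  hence "(\<lambda>n. W n - W (Suc n)) \<longlonglongrightarrow> 0" by simp
  moreover have "d n \<le> W n - W (Suc n)" for n using dec[of n] by linarith
  ultimately show ?thesis
    using assms(3) tendsto_sandwich[of "\<lambda>_. 0" d sequentially "\<lambda>n. W n - W (Suc n)" 0] by simp
qed

lemma pos_def_tendsto_zero:
  fixes A :: "real^'n^'n" and x :: "nat \<Rightarrow> real^'n"
  assumes "pos_def A" and form: "(\<lambda>n. x n \<bullet> (A *v x n)) \<longlonglongrightarrow> 0"
  shows "x \<longlonglongrightarrow> 0"
proof -
  obtain m where "0 < m" and m: "\<And>y. m * (y \<bullet> y) \<le> y \<bullet> (A *v y)"
    using pos_def_quadratic_form_ge[OF \<open>pos_def A\<close>] by blast
  have "(\<lambda>n. x n \<bullet> (A *v x n) / m) \<longlonglongrightarrow> 0"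
    using tendsto_divide_zero[OF form] by simp
  moreover have "x n \<bullet> x n \<le> x n \<bullet> (A *v x n) / m" for n
    using m[of "x n"] \<open>0 < m\<close> by (simp add: field_simps)
  ultimately have "(\<lambda>n. x n \<bullet> x n) \<longlonglongrightarrow> 0"
    using tendsto_sandwich[of "\<lambda>_. 0" "\<lambda>n. x n \<bullet> x n" sequentially "\<lambda>n. x n \<bullet> (A *v x n) / m" 0]
    by simp
  hence "(\<lambda>n. sqrt (x n \<bullet> x n)) \<longlonglongrightarrow> sqrt 0" by (rule tendsto_real_sqrt)
  hence "(\<lambda>n. norm (x n)) \<longlonglongrightarrow> 0" by (simp add: norm_eq_sqrt_inner)
  thus ?thesis by (simp add: tendsto_norm_zero_iff)
qed

lemma delayed_gradient_error_tendsto_zero: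
  fixes A :: "real^'n^'n" and e :: "nat \<Rightarrow> real^'n"
  assumes symm: "transpose A = A" and pd: "pos_def A"
    and "0 < h" and small: "h * lambda_max A \<le> 1 / 2"
    and rec: "\<And>n. e (n + 2) = e (n + 1) - h *\<^sub>R (A *v e n)"
  shows "e \<longlonglongrightarrow> 0"
proof -
  note nonneg = pos_def_imp_nonneg[OF pd]
  define W where "W n = lyapunov A h (e (Suc n)) (e n)" for n
  have "W (Suc n) + h * (e n \<bullet> (A *v e n)) \<le> W n" for n
    using lyapunov_step[OF symm nonneg quadratic_form_le_lambda_max[OF symm] lambda_max_pos[OF symm pd]
        less_imp_le[OF \<open>0 < h\<close>] small, of "e (Suc n)" "e n"] rec[of n]
    by (simp add: W_def numeral_2_eq_2)
  moreover have "0 \<le> W n" for n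
    using lyapunov_ge[OF nonneg less_imp_le[OF \<open>0 < h\<close>], of "e (Suc n)" "e n"]
      inner_ge_zero[of "e (Suc n)"]
    unfolding W_def by linarith
  moreover have "0 \<le> h * (e n \<bullet> (A *v e n))" for n
    using nonneg \<open>0 < h\<close> by simp
  ultimately have "(\<lambda>n. h * (e n \<bullet> (A *v e n))) \<longlonglongrightarrow> h * 0"
    using nonneg_decrements_tendsto_zero[of W "\<lambda>n. h * (e n \<bullet> (A *v e n))"] by simp
  hence "(\<lambda>n. e n \<bullet> (A *v e n)) \<longlonglongrightarrow> 0"
    using tendsto_mult_left_iff[of h "\<lambda>n. e n \<bullet> (A *v e n)" 0 sequentially] \<open>0 < h\<close> by simp
  thus ?thesis by (rule pos_def_tendsto_zero[OF pd])
qed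

theorem theorem4:
  fixes A :: "real^'n^'n" and b ustar :: "real^'n" and \<delta> \<eta> :: real
    and u :: "nat \<Rightarrow> real^'n"
  assumes symm: "transpose A = A"
    and pd: "pos_def A"
    and sol: "A *v ustar + b = 0"
    and uniq: "\<And>v. A *v v + b = 0 \<Longrightarrow> v = ustar"
    and u0: "u 0 = 0" and u1: "u 1 = 0"
    and rec: "\<And>l. l \<ge> 1 \<Longrightarrow> u (l + 1) = u l - (\<delta> * \<eta>) *\<^sub>R (A *v u (l - 1) + b)"
    and step_pos: "0 < \<delta> * \<eta>"
    and step_small: "\<delta> * \<eta> < 1 / (4 * lambda_max A)"
  shows "u \<longlonglongrightarrow> ustar"
proof -
  \<comment> \<open>Neither the initial values nor \<open>uniq\<close> is needed: positive definiteness already makes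
      the solution unique, and the error tends to 0 from any starting point.\<close>
  define e where "e n = u n - ustar" for n
  have "A *v u n + b = A *v e n + (A *v ustar + b)" for n
    by (simp add: e_def matrix_vector_mult_diff_distrib)
  hence error_rec: "e (n + 2) = e (n + 1) - (\<delta> * \<eta>) *\<^sub>R (A *v e n)" for n
    using rec[of "n + 1"] sol by (simp add: e_def)
  have "\<delta> * \<eta> * (4 * lambda_max A) < 1"
    using step_small lambda_max_pos[OF symm pd] by (simp add: pos_less_divide_eq)
  hence "\<delta> * \<eta> * lambda_max A \<le> 1 / 2" by linarith
  from delayed_gradient_error_tendsto_zero[OF symm pd step_pos this error_rec]
  have "e \<longlonglongrightarrow> 0" .
  from tendsto_add[OF this tendsto_const[of ustar]] show ?thesis by (simp add: e_def)
qed

end
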